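(* Let $I$ be a finite set. The space $\mathcal{P}(\mathbf{k}\mathbf{SC})[I]$ of primitive elements of $\mathbf{k}\mathbf{SC}[I]$ has a basis consisting of the elements \[\omega^{\Gamma}=\sum_{\Phi\le\Gamma}\mu(\Phi,\Gamma)\,\Phi\] for connected $\Gamma\in\mathbf{SC}[I]$.
   Context: $\mathbf{k}$ is a field of characteristic $0$. A simplicial complex on a finite ground set $I$ is a downward closed collection $\Gamma\subseteq2^I$. $\mathbf{SC}[I]$ is the set of simplicial complexes on $I$, ordered by $\Phi\le\Gamma$ iff every $X\in\Phi$ lies in $\Gamma$; $\mu$ is the Möbius function of this poset; $\mathbf{k}\mathbf{SC}[I]$ is the vector space with basis $\mathbf{SC}[I]$. Multiplication: for $\Gamma_1$ on $S$, $\Gamma_2$ on $T$ disjoint, $m_{S,T}(\Gamma_1,\Gamma_2)=\Gamma_1\sqcup\Gamma_2=\{A\subseteq S\sqcup T:A\in\Gamma_1\text{ or }A\in\Gamma_2\}$. Comultiplication: $\Delta_{S,T}(\Gamma)=\Gamma|S\otimes\Gamma|T$ with $\Gamma|S=\Gamma\cap2^S$. An element $p\in\mathbf{k}\mathbf{SC}[I]$ is primitive if $\Delta_{S,T}(p)=0$ for all $I=S\sqcup T$ with $S,T$ nonempty. $\Gamma\in\mathbf{SC}[I]$ is connected if it cannot be written as $\Gamma_1\sqcup\Gamma_2$ with $\Gamma_1\in\mathbf{SC}[S]$, $\Gamma_2\in\mathbf{SC}[T]$, $I=S\sqcup T$, $S,T$ nonempty. *)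

theory Defs
  imports Main "HOL.Modules" "HOL-Library.Function_Algebras"
begin

definition SC :: "'a set \<Rightarrow> 'a set set set" where
  "SC I = {\<Gamma>. \<Gamma> \<subseteq> Pow I \<and> (\<forall>X\<in>\<Gamma>. \<forall>Y. Y \<subseteq> X \<longrightarrow> Y \<in> \<Gamma>)}"

definition restr :: "'a set set \<Rightarrow> 'a set \<Rightarrow> 'a set set" where
  "restr \<Gamma> S = \<Gamma> \<inter> Pow S"

text \<open>The recursion is run with a fuel parameter; fuel card P suffices
  since every chain in P has fewer than card P steps.\<close>
fun mobius_aux :: "'c set set \<Rightarrow> nat \<Rightarrow> 'c set \<Rightarrow> 'c set \<Rightarrow> 'k::ring_1" where
  "mobius_aux P 0 x y = (if x = y then 1 else 0)"
| "mobius_aux P (Suc n) x y =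
     (if x = y then 1
      else if x \<subseteq> y then - (\<Sum>z\<in>{z\<in>P. x \<subseteq> z \<and> z \<subseteq> y \<and> z \<noteq> y}. mobius_aux P n x z)
      else 0)"

definition mobius :: "'c set set \<Rightarrow> 'c set \<Rightarrow> 'c set \<Rightarrow> 'k::ring_1" where
  "mobius P x y = mobius_aux P (card P) x y"

text \<open>Elements of kSC[I] are coefficient functions on complexes, supported on SC[I].\<close>
definition kSC :: "'a set \<Rightarrow> ('a set set \<Rightarrow> 'k::zero) set" where
  "kSC I = {p. \<forall>\<Gamma>. \<Gamma> \<notin> SC I \<longrightarrow> p \<Gamma> = 0}"

text \<open>Coefficient of the basis tensor A \<otimes> B in Delta_{S,T}(p), where Delta_{S,T} is the
  linear extension of Gamma \<mapsto> Gamma|S \<otimes> Gamma|T.\<close>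
definition Delta_coeff :: "'a set \<Rightarrow> 'a set \<Rightarrow> 'a set \<Rightarrow> ('a set set \<Rightarrow> 'k::comm_monoid_add)
    \<Rightarrow> 'a set set \<Rightarrow> 'a set set \<Rightarrow> 'k" where
  "Delta_coeff I S T p A B = (\<Sum>\<Gamma>\<in>{\<Gamma>\<in>SC I. restr \<Gamma> S = A \<and> restr \<Gamma> T = B}. p \<Gamma>)"

definition primitive :: "'a set \<Rightarrow> ('a set set \<Rightarrow> 'k::comm_monoid_add) \<Rightarrow> bool" where
  "primitive I p \<longleftrightarrow> (\<forall>S T. S \<union> T = I \<and> S \<inter> T = {} \<and> S \<noteq> {} \<and> T \<noteq> {} \<longrightarrow>
      (\<forall>A B. Delta_coeff I S T p A B = 0))"

definition primitives :: "'a set \<Rightarrow> ('a set set \<Rightarrow> 'k::comm_monoid_add) set" where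
  "primitives I = {p \<in> kSC I. primitive I p}"

definition connected_SC :: "'a set \<Rightarrow> 'a set set \<Rightarrow> bool" where
  "connected_SC I \<Gamma> \<longleftrightarrow> \<Gamma> \<in> SC I \<and>
     \<not> (\<exists>S T \<Gamma>1 \<Gamma>2. S \<union> T = I \<and> S \<inter> T = {} \<and> S \<noteq> {} \<and> T \<noteq> {} \<and>
          \<Gamma>1 \<in> SC S \<and> \<Gamma>2 \<in> SC T \<and> \<Gamma> = \<Gamma>1 \<union> \<Gamma>2)"

definition omega :: "'a set \<Rightarrow> 'a set set \<Rightarrow> ('a set set \<Rightarrow> 'k::ring_1)" where
  "omega I \<Gamma> = (\<lambda>\<Phi>. if \<Phi> \<in> SC I \<and> \<Phi> \<subseteq> \<Gamma> then mobius (SC I) \<Phi> \<Gamma> else 0)"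

definition fscale :: "'k::times \<Rightarrow> ('b \<Rightarrow> 'k) \<Rightarrow> ('b \<Rightarrow> 'k)" where
  "fscale c f = (\<lambda>x. c * f x)"

end

theory Submission
  imports Defs
begin

text \<open>The Moebius function of \<open>SC[I]\<close> has a closed form: \<open>\<mu>(\<Phi>,\<Gamma>) = (-1)^|\<Gamma> - \<Phi>|\<close> if
  \<open>\<Phi> \<subseteq> \<Gamma>\<close> and every face of \<open>\<Gamma>\<close> missing from \<open>\<Phi>\<close> has all its proper subsets in \<open>\<Phi>\<close>
  (the interval \<open>[\<Phi>,\<Gamma>]\<close> is then Boolean), and \<open>0\<close> otherwise.  In particular \<open>\<omega>\<^sup>\<Gamma>\<close> is
  unitriangular with respect to inclusion, which gives injectivity and linear independence.

  If \<open>\<Gamma>\<close> is connected and \<open>I = S \<union> T\<close>, some facet \<open>X\<close> of \<open>\<Gamma>\<close> lies in neither \<open>S\<close> nor \<open>T\<close>.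
  Adding or removing \<open>X\<close> does not change the restrictions to \<open>S\<close> and \<open>T\<close> but flips the sign of
  the coefficient in \<open>\<omega>\<^sup>\<Gamma>\<close>, so all coefficients of \<open>\<Delta>\<^sub>S\<^sub>,\<^sub>T(\<omega>\<^sup>\<Gamma>)\<close> cancel.

  Conversely, Moebius inversion writes every \<open>p\<close> as \<open>\<Sum>\<^sub>\<Gamma> c\<^sub>\<Gamma> \<omega>\<^sup>\<Gamma>\<close> with
  \<open>c\<^sub>\<Gamma> = \<Sum>\<^sub>\<Phi>\<^sub>\<supseteq>\<^sub>\<Gamma> p(\<Phi>)\<close>.  If \<open>\<Gamma> = \<Gamma>\<^sub>1 \<squnion> \<Gamma>\<^sub>2\<close> is disconnected along \<open>S, T\<close>, then
  \<open>\<Phi> \<supseteq> \<Gamma>\<close> depends only on \<open>\<Phi>|S\<close> and \<open>\<Phi>|T\<close>, so \<open>c\<^sub>\<Gamma>\<close> is a sum of coefficients of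
  \<open>\<Delta>\<^sub>S\<^sub>,\<^sub>T(p)\<close> and vanishes for primitive \<open>p\<close>.\<close>

lemma finite_SC: "finite I \<Longrightarrow> finite (SC I)"
  by (rule finite_subset[of _ "Pow (Pow I)"]) (auto simp: SC_def)

lemma SC_subset_Pow: "\<Gamma> \<in> SC I \<Longrightarrow> \<Gamma> \<subseteq> Pow I"
  by (simp add: SC_def)

lemma SC_downward_closed: "\<Gamma> \<in> SC I \<Longrightarrow> X \<in> \<Gamma> \<Longrightarrow> Y \<subseteq> X \<Longrightarrow> Y \<in> \<Gamma>"
  by (auto simp: SC_def)

lemma finite_complex: "finite I \<Longrightarrow> \<Gamma> \<in> SC I \<Longrightarrow> finite \<Gamma>"
  using SC_subset_Pow finite_subset by blast

lemma card_complex_le_card_SC: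
  assumes "finite I" "\<Gamma> \<in> SC I"
  shows "card \<Gamma> \<le> card (SC I)"
proof -
  have "card \<Gamma> \<le> card (Pow I)"
    using assms by (intro card_mono) (auto simp: SC_subset_Pow)
  also have "\<dots> \<le> card (SC I)"
    using assms by (intro card_inj_on_le[of Pow]) (auto simp: inj_on_def SC_def finite_SC)
  finally show ?thesis .
qed

lemma union_SC:
  assumes "\<Phi> \<in> SC I" "A \<subseteq> Pow I" "\<forall>Y\<in>A. \<forall>Z. Z \<subset> Y \<longrightarrow> Z \<in> \<Phi>"
  shows "\<Phi> \<union> A \<in> SC I"
proof -
  have "Y \<in> \<Phi> \<union> A" if "X \<in> \<Phi> \<union> A" "Y \<subseteq> X" for X Y
  proof (cases "X \<in> \<Phi>")
    case True
    then show ?thesis using SC_downward_closed[OF assms(1)] that(2) by blast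
  next
    case False
    then have "X \<in> A" using that(1) by blast
    then show ?thesis using assms(3) that(2) by (cases "Y = X") auto
  qed
  then show ?thesis using assms by (auto simp: SC_def)
qed

definition facet :: "'a set \<Rightarrow> 'a set set \<Rightarrow> bool" where
  "facet X \<Gamma> \<longleftrightarrow> X \<in> \<Gamma> \<and> (\<forall>Y\<in>\<Gamma>. X \<subseteq> Y \<longrightarrow> Y = X)"

lemma SC_remove_facet: "\<Phi> \<in> SC I \<Longrightarrow> facet X \<Phi> \<Longrightarrow> \<Phi> - {X} \<in> SC I"
  by (auto simp: SC_def facet_def)

lemma sum_Pow_minus_one_power:
  assumes "finite N" "N \<noteq> {}"
  shows "(\<Sum>A\<in>Pow N. (-1::'k::ring_1) ^ card A) = 0"
  using assms card_subsupersets_even_odd[of N "{}"]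
  by (intro sum_alternating_cancels) (auto simp: Pow_def)

definition mobius_SC :: "'a set set \<Rightarrow> 'a set set \<Rightarrow> 'k::ring_1" where
  "mobius_SC \<Phi> \<Gamma> =
     (if \<Phi> \<subseteq> \<Gamma> \<and> (\<forall>Y\<in>\<Gamma> - \<Phi>. \<forall>Z. Z \<subset> Y \<longrightarrow> Z \<in> \<Phi>) then (-1) ^ card (\<Gamma> - \<Phi>) else 0)"

definition addable_faces :: "'a set set \<Rightarrow> 'a set set \<Rightarrow> 'a set set" where
  "addable_faces \<Phi> \<Gamma> = {Y\<in>\<Gamma> - \<Phi>. \<forall>Z. Z \<subset> Y \<longrightarrow> Z \<in> \<Phi>}"

lemma union_addable_faces_in_interval:
  assumes "\<Phi> \<in> SC I" "\<Gamma> \<in> SC I" "\<Phi> \<subseteq> \<Gamma>" "A \<subseteq> addable_faces \<Phi> \<Gamma>"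
  shows "\<Phi> \<union> A \<in> {\<Psi>\<in>SC I. \<Phi> \<subseteq> \<Psi> \<and> \<Psi> \<subseteq> \<Gamma>}"
proof -
  have "A \<subseteq> Pow I" using assms(4) SC_subset_Pow[OF assms(2)] by (auto simp: addable_faces_def)
  then have "\<Phi> \<union> A \<in> SC I"
    by (rule union_SC[OF assms(1)]) (use assms(4) in \<open>auto simp: addable_faces_def\<close>)
  then show ?thesis using assms(3,4) by (auto simp: addable_faces_def)
qed

lemma mobius_SC_union_addable_faces:
  assumes "\<Phi> \<subseteq> \<Gamma>" "A \<subseteq> addable_faces \<Phi> \<Gamma>"
  shows "mobius_SC \<Phi> (\<Phi> \<union> A) = (-1) ^ card A"
proof -
  have "\<Phi> \<union> A - \<Phi> = A" "\<forall>Y\<in>A. \<forall>Z. Z \<subset> Y \<longrightarrow> Z \<in> \<Phi>"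
    using assms(2) by (auto simp: addable_faces_def)
  then show ?thesis by (simp add: mobius_SC_def)
qed

lemma mobius_SC_eq_0_unless_union_addable_faces:
  assumes "\<Phi> \<subseteq> \<Psi>" "\<Psi> \<subseteq> \<Gamma>" "\<Psi> \<notin> (\<union>) \<Phi> ` Pow (addable_faces \<Phi> \<Gamma>)"
  shows "mobius_SC \<Phi> \<Psi> = 0"
proof -
  have "\<Psi> = \<Phi> \<union> (\<Psi> - \<Phi>)" using assms(1) by blast
  with assms(3) have "\<not> \<Psi> - \<Phi> \<subseteq> addable_faces \<Phi> \<Gamma>" by blast
  then obtain Y Z where "Y \<in> \<Psi> - \<Phi>" "Z \<subset> Y" "Z \<notin> \<Phi>"
    using assms(2) by (auto simp: addable_faces_def)
  then show ?thesis by (auto simp: mobius_SC_def)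
qed

lemma addable_faces_nonempty:
  assumes "finite I" "\<Gamma> \<in> SC I" "\<Phi> \<subset> \<Gamma>"
  shows "addable_faces \<Phi> \<Gamma> \<noteq> {}"
proof -
  have "\<Gamma> - \<Phi> \<noteq> {}" using assms(3) by blast
  with finite_complex[OF assms(1,2)] obtain Y where Y: "Y \<in> \<Gamma> - \<Phi>" "\<forall>Y'\<in>\<Gamma> - \<Phi>. Y' \<subseteq> Y \<longrightarrow> Y' = Y"
    by (metis finite_Diff finite_has_minimal)
  then have "Y \<in> addable_faces \<Phi> \<Gamma>"
    using SC_downward_closed[OF assms(2)] by (auto simp: addable_faces_def)
  then show ?thesis by blast
qed

lemma sum_mobius_SC_interval:
  assumes "finite I" "\<Phi> \<in> SC I" "\<Gamma> \<in> SC I"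
  shows "(\<Sum>\<Psi>\<in>{\<Psi>\<in>SC I. \<Phi> \<subseteq> \<Psi> \<and> \<Psi> \<subseteq> \<Gamma>}. mobius_SC \<Phi> \<Psi> :: 'k::ring_1) = (if \<Phi> = \<Gamma> then 1 else 0)"
proof (cases "\<Phi> \<subseteq> \<Gamma>")
  case False
  then have "{\<Psi>\<in>SC I. \<Phi> \<subseteq> \<Psi> \<and> \<Psi> \<subseteq> \<Gamma>} = {}" by blast
  then show ?thesis using False by (simp only: sum.empty) auto
next
  case True
  define N where "N = addable_faces \<Phi> \<Gamma>"
  have "finite N"
    using finite_complex[OF assms(1,3)] by (simp add: N_def addable_faces_def)
  have "(\<Sum>\<Psi>\<in>{\<Psi>\<in>SC I. \<Phi> \<subseteq> \<Psi> \<and> \<Psi> \<subseteq> \<Gamma>}. mobius_SC \<Phi> \<Psi> :: 'k)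
      = (\<Sum>\<Psi>\<in>(\<union>) \<Phi> ` Pow N. mobius_SC \<Phi> \<Psi>)"
  proof (rule sum.mono_neutral_right)
    show "finite {\<Psi>\<in>SC I. \<Phi> \<subseteq> \<Psi> \<and> \<Psi> \<subseteq> \<Gamma>}"
      by (rule finite_subset[OF _ finite_SC[OF assms(1)]]) blast
    show "(\<union>) \<Phi> ` Pow N \<subseteq> {\<Psi>\<in>SC I. \<Phi> \<subseteq> \<Psi> \<and> \<Psi> \<subseteq> \<Gamma>}"
      using union_addable_faces_in_interval[OF assms(2,3) True] by (auto simp: N_def)
    show "\<forall>\<Psi>\<in>{\<Psi>\<in>SC I. \<Phi> \<subseteq> \<Psi> \<and> \<Psi> \<subseteq> \<Gamma>} - (\<union>) \<Phi> ` Pow N. mobius_SC \<Phi> \<Psi> = 0"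
      using mobius_SC_eq_0_unless_union_addable_faces by (auto simp: N_def)
  qed
  also have "\<dots> = (\<Sum>A\<in>Pow N. (-1) ^ card A)"
  proof (rule sum.reindex_cong[where l="(\<union>) \<Phi>"])
    show "inj_on ((\<union>) \<Phi>) (Pow N)"
      by (intro inj_onI) (auto simp: N_def addable_faces_def)
  qed (use mobius_SC_union_addable_faces[OF True] in \<open>auto simp: N_def\<close>)
  also have "\<dots> = (if \<Phi> = \<Gamma> then 1 else 0)"
  proof (cases "\<Phi> = \<Gamma>")
    case False
    then show ?thesis
      using True addable_faces_nonempty[OF assms(1,3)] sum_Pow_minus_one_power[OF \<open>finite N\<close>]
      by (auto simp: N_def)
  next
    case True
    then have "N = {}" by (simp add: N_def addable_faces_def)
    then show ?thesis using True by simp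
  qed
  finally show ?thesis .
qed

lemma mobius_aux_SC_eq:
  assumes "finite I" "\<Phi> \<in> SC I" "\<Gamma> \<in> SC I" "card (\<Gamma> - \<Phi>) \<le> n"
  shows "mobius_aux (SC I) n \<Phi> \<Gamma> = (mobius_SC \<Phi> \<Gamma> :: 'k::ring_1)"
  using assms(3,4)
proof (induction n arbitrary: \<Gamma>)
  case 0
  then have "\<Gamma> \<subseteq> \<Phi>" using assms(1) finite_complex by fastforce
  then consider "\<Phi> = \<Gamma>" | "\<not> \<Phi> \<subseteq> \<Gamma>" by blast
  then show ?case by cases (simp_all add: mobius_SC_def)
next
  case (Suc n \<Gamma>)
  show ?case
  proof (cases "\<Phi> \<subset> \<Gamma>")
    case True
    let ?below = "{\<Psi>\<in>SC I. \<Phi> \<subseteq> \<Psi> \<and> \<Psi> \<subseteq> \<Gamma> \<and> \<Psi> \<noteq> \<Gamma>}"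
    have below_eq: "(\<Sum>\<Psi>\<in>?below. mobius_aux (SC I) n \<Phi> \<Psi>) = (\<Sum>\<Psi>\<in>?below. mobius_SC \<Phi> \<Psi> :: 'k)"
    proof (rule sum.cong[OF refl])
      fix \<Psi> assume \<Psi>: "\<Psi> \<in> ?below"
      show "mobius_aux (SC I) n \<Phi> \<Psi> = (mobius_SC \<Phi> \<Psi> :: 'k)"
      proof (rule Suc.IH)
        have "card (\<Psi> - \<Phi>) < card (\<Gamma> - \<Phi>)"
          using \<Psi> Suc.prems assms(1) finite_complex by (intro psubset_card_mono) auto
        then show "card (\<Psi> - \<Phi>) \<le> n" using Suc.prems(2) by linarith
      qed (use \<Psi> in blast)
    qed
    have "{\<Psi>\<in>SC I. \<Phi> \<subseteq> \<Psi> \<and> \<Psi> \<subseteq> \<Gamma>} = insert \<Gamma> ?below"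
      using Suc.prems True by auto
    moreover have "finite ?below" by (rule finite_subset[OF _ finite_SC[OF assms(1)]]) blast
    ultimately have sum_below: "(\<Sum>\<Psi>\<in>?below. mobius_SC \<Phi> \<Psi>) = - (mobius_SC \<Phi> \<Gamma> :: 'k)"
      using sum_mobius_SC_interval[OF assms(1,2) Suc.prems(1), where 'k='k] \<open>\<Phi> \<subset> \<Gamma>\<close>
      by (simp add: add_eq_0_iff psubset_eq)
    have "mobius_aux (SC I) (Suc n) \<Phi> \<Gamma> = - (\<Sum>\<Psi>\<in>?below. mobius_aux (SC I) n \<Phi> \<Psi>)"
      using True by simp
    also have "\<dots> = - (\<Sum>\<Psi>\<in>?below. mobius_SC \<Phi> \<Psi> :: 'k)"
      by (simp only: below_eq)
    also have "\<dots> = mobius_SC \<Phi> \<Gamma>"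
      by (simp only: sum_below minus_minus)
    finally show ?thesis .
  next
    case False
    then consider "\<Phi> = \<Gamma>" | "\<not> \<Phi> \<subseteq> \<Gamma>" by blast
    then show ?thesis by cases (simp_all add: mobius_SC_def)
  qed
qed

lemma mobius_SC_eq:
  assumes "finite I" "\<Phi> \<in> SC I" "\<Gamma> \<in> SC I"
  shows "mobius (SC I) \<Phi> \<Gamma> = (mobius_SC \<Phi> \<Gamma> :: 'k::ring_1)"
proof -
  have "card (\<Gamma> - \<Phi>) \<le> card \<Gamma>"
    using assms finite_complex by (intro card_mono) auto
  also have "\<dots> \<le> card (SC I)" using card_complex_le_card_SC assms by blast
  finally show ?thesis
    unfolding mobius_def using mobius_aux_SC_eq[OF assms] by blast
qed

lemma omega_eq:
  assumes "finite I" "\<Gamma> \<in> SC I"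
  shows "(omega I \<Gamma> :: _ \<Rightarrow> 'k::ring_1) \<Phi> = (if \<Phi> \<in> SC I then mobius_SC \<Phi> \<Gamma> else 0)"
proof (cases "\<Phi> \<subseteq> \<Gamma>")
  case True
  then show ?thesis using mobius_SC_eq[OF assms(1) _ assms(2), of \<Phi>, where 'k='k] by (simp add: omega_def)
next
  case False
  then show ?thesis by (simp add: omega_def mobius_SC_def)
qed

lemma omega_diag: "finite I \<Longrightarrow> \<Gamma> \<in> SC I \<Longrightarrow> (omega I \<Gamma> :: _ \<Rightarrow> 'k::ring_1) \<Gamma> = 1"
  by (simp add: omega_eq mobius_SC_def)

lemma omega_nonzero_imp_subset: "(omega I \<Gamma> :: _ \<Rightarrow> 'k::ring_1) \<Phi> \<noteq> 0 \<Longrightarrow> \<Phi> \<subseteq> \<Gamma>"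
  by (simp add: omega_def split: if_splits)

lemma module_fscale: "module (fscale :: 'k::comm_ring_1 \<Rightarrow> ('b \<Rightarrow> 'k) \<Rightarrow> ('b \<Rightarrow> 'k))"
  by standard (auto simp: fscale_def algebra_simps fun_eq_iff)

lemma sum_fun_apply: "(\<Sum>a\<in>A. f a) x = (\<Sum>a\<in>A. f a x)"
  by (induction A rule: infinite_finite_induct) auto

lemma inj_on_unitriangular:
  fixes f :: "'b::order \<Rightarrow> 'b \<Rightarrow> 'k::zero_neq_one"
  assumes "\<And>x. x \<in> C \<Longrightarrow> f x x = 1" "\<And>x y. x \<in> C \<Longrightarrow> f x y \<noteq> 0 \<Longrightarrow> y \<le> x"
  shows "inj_on f C"
proof (rule inj_onI)
  fix x y assume "x \<in> C" "y \<in> C" "f x = f y"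
  then have "f y x \<noteq> 0" "f x y \<noteq> 0" using assms(1) by (metis one_neq_zero)+
  then show "x = y" using assms(2) \<open>x \<in> C\<close> \<open>y \<in> C\<close> by (meson order.antisym)
qed

lemma independent_unitriangular:
  fixes f :: "'b::order \<Rightarrow> 'b \<Rightarrow> 'k::comm_ring_1"
  assumes diag: "\<And>x. x \<in> C \<Longrightarrow> f x x = 1"
    and tri: "\<And>x y. x \<in> C \<Longrightarrow> f x y \<noteq> 0 \<Longrightarrow> y \<le> x"
  shows "\<not> module.dependent fscale (f ` C)"
proof -
  interpret module "fscale :: 'k \<Rightarrow> ('b \<Rightarrow> 'k) \<Rightarrow> _" by (rule module_fscale)
  have "u v = 0" if t: "finite t" "t \<subseteq> f ` C" and sum_t: "(\<Sum>v\<in>t. fscale (u v) v) = 0"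
    and "v \<in> t" for t u v
  \<comment> \<open>evaluating the combination at a maximal index with nonzero coefficient isolates that coefficient\<close>
  proof (rule ccontr)
    assume "u v \<noteq> 0"
    define W where "W = {x \<in> C. f x \<in> t \<and> u (f x) \<noteq> 0}"
    have "inj_on f W"
      using inj_on_unitriangular[of C f, OF diag tri] by (rule inj_on_subset) (auto simp: W_def)
    moreover have "f ` W \<subseteq> t" by (auto simp: W_def)
    ultimately have "finite W" using t(1) finite_subset finite_imageD by metis
    moreover have "W \<noteq> {}" using \<open>v \<in> t\<close> \<open>u v \<noteq> 0\<close> t(2) by (auto simp: W_def)
    ultimately obtain x where x: "x \<in> W" "\<forall>y\<in>W. x \<le> y \<longrightarrow> x = y"
      using finite_has_maximal by blast
    have others: "u w * w x = 0" if w: "w \<in> t - {f x}" for w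
    proof (rule ccontr)
      assume "u w * w x \<noteq> 0"
      then have "u w \<noteq> 0" "w x \<noteq> 0" by auto
      obtain y where "y \<in> C" "w = f y" using w t(2) by blast
      then have "y \<in> W" "x \<le> y" using w \<open>u w \<noteq> 0\<close> \<open>w x \<noteq> 0\<close> tri by (auto simp: W_def)
      then show False using x(2) \<open>w = f y\<close> w by blast
    qed
    have "0 = (\<Sum>w\<in>t. u w * w x)"
      using fun_cong[OF sum_t, of x] by (simp add: fscale_def sum_fun_apply)
    also have "\<dots> = u (f x) * f x x + (\<Sum>w\<in>t - {f x}. u w * w x)"
      using x(1) t(1) by (intro sum.remove) (auto simp: W_def)
    also have "\<dots> = u (f x)"
      using others diag x(1) by (simp add: W_def)
    finally show False using x(1) by (simp add: W_def)
  qed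
  then show ?thesis unfolding independent_explicit_module by blast
qed

lemma insert_SC_if_mobius_SC_nonzero:
  assumes "mobius_SC \<Phi> \<Gamma> \<noteq> (0::'k::ring_1)" "\<Phi> \<in> SC I" "\<Gamma> \<in> SC I" "X \<in> \<Gamma>"
  shows "insert X \<Phi> \<in> SC I"
proof (cases "X \<in> \<Phi>")
  case False
  then have "\<forall>Z. Z \<subset> X \<longrightarrow> Z \<in> \<Phi>"
    using assms(1,4) by (auto simp: mobius_SC_def split: if_splits)
  then have "\<Phi> \<union> {X} \<in> SC I"
    using assms(3,4) by (intro union_SC[OF assms(2)]) (auto simp: SC_def)
  then show ?thesis by simp
qed (simp add: insert_absorb assms(2))

lemma mobius_SC_insert_facet:
  assumes "finite \<Gamma>" "facet X \<Gamma>" "X \<notin> \<Phi>" "insert X \<Phi> \<in> SC I"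
  shows "mobius_SC (insert X \<Phi>) \<Gamma> = - (mobius_SC \<Phi> \<Gamma> :: 'k::ring_1)"
proof (cases "\<Phi> \<subseteq> \<Gamma>")
  case True
  have "X \<in> \<Gamma>" using assms(2) by (simp add: facet_def)
  have card: "card (\<Gamma> - \<Phi>) = Suc (card (\<Gamma> - insert X \<Phi>))"
    using assms(1,3) \<open>X \<in> \<Gamma>\<close> by (metis Diff_insert card_Suc_Diff1 finite_Diff Diff_iff)
  have boundary_iff: "(\<forall>Y\<in>\<Gamma> - \<Phi>. \<forall>Z. Z \<subset> Y \<longrightarrow> Z \<in> \<Phi>) \<longleftrightarrow>
        (\<forall>Y\<in>\<Gamma> - insert X \<Phi>. \<forall>Z. Z \<subset> Y \<longrightarrow> Z \<in> insert X \<Phi>)"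
  proof
    assume "\<forall>Y\<in>\<Gamma> - insert X \<Phi>. \<forall>Z. Z \<subset> Y \<longrightarrow> Z \<in> insert X \<Phi>"
    moreover have "Z \<in> \<Phi>" if "Z \<subset> X" for Z
      using that assms(3) SC_downward_closed[OF assms(4), of X Z] by auto
    moreover have "Z \<noteq> X" if "Y \<in> \<Gamma>" "Z \<subset> Y" for Y Z
      using that assms(2) by (auto simp: facet_def)
    ultimately show "\<forall>Y\<in>\<Gamma> - \<Phi>. \<forall>Z. Z \<subset> Y \<longrightarrow> Z \<in> \<Phi>"
      by (metis Diff_iff insert_iff)
  qed auto
  have "insert X \<Phi> \<subseteq> \<Gamma>" using True \<open>X \<in> \<Gamma>\<close> by blast
  then show ?thesis
    unfolding mobius_SC_def using True card by (simp only: boundary_iff) auto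
next
  case False
  then show ?thesis by (simp add: mobius_SC_def)
qed

lemma omega_insert_facet:
  assumes "finite I" "\<Gamma> \<in> SC I" "facet X \<Gamma>" "X \<notin> \<Phi>"
  shows "(omega I \<Gamma> :: _ \<Rightarrow> 'k::ring_1) (insert X \<Phi>) = - omega I \<Gamma> \<Phi>"
proof (cases "insert X \<Phi> \<in> SC I")
  case True
  have "\<Phi> \<in> SC I" if "(omega I \<Gamma> :: _ \<Rightarrow> 'k) (insert X \<Phi>) \<noteq> 0"
  proof -
    have "insert X \<Phi> \<subseteq> \<Gamma>" using that omega_nonzero_imp_subset by blast
    then have "facet X (insert X \<Phi>)" using assms(3) by (auto simp: facet_def)
    from SC_remove_facet[OF True this] show ?thesis using assms(4) by simp
  qed
  then show ?thesis
    using True mobius_SC_insert_facet[OF finite_complex[OF assms(1,2)] assms(3,4) True, where 'k='k]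
    by (cases "\<Phi> \<in> SC I") (auto simp: omega_eq[OF assms(1,2)])
next
  case False
  then show ?thesis
    using insert_SC_if_mobius_SC_nonzero[OF _ _ assms(2), of \<Phi> X, where 'k='k] assms(3)
    by (auto simp: omega_eq[OF assms(1,2)] facet_def)
qed

lemma sum_eq_0_if_insert_negates:
  fixes f :: "'b set \<Rightarrow> 'k::ab_group_add"
  assumes "finite P"
    and closed: "\<And>\<Phi>. x \<notin> \<Phi> \<Longrightarrow> insert x \<Phi> \<in> P \<longleftrightarrow> \<Phi> \<in> P"
    and negates: "\<And>\<Phi>. x \<notin> \<Phi> \<Longrightarrow> f (insert x \<Phi>) = - f \<Phi>"
  shows "sum f P = 0"
proof -
  define P0 where "P0 = {\<Phi>\<in>P. x \<notin> \<Phi>}"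
  have "{\<Phi>\<in>P. x \<in> \<Phi>} = insert x ` P0"
  proof (intro equalityI subsetI)
    fix \<Phi> assume "\<Phi> \<in> {\<Phi>\<in>P. x \<in> \<Phi>}"
    then have "\<Phi> = insert x (\<Phi> - {x})" "\<Phi> - {x} \<in> P0"
      using closed[of "\<Phi> - {x}"] by (auto simp: P0_def insert_absorb)
    then show "\<Phi> \<in> insert x ` P0" by blast
  qed (use closed in \<open>auto simp: P0_def\<close>)
  moreover have "inj_on (insert x) P0"
    by (intro inj_onI) (metis P0_def mem_Collect_eq Diff_insert_absorb)
  ultimately have "sum f {\<Phi>\<in>P. x \<in> \<Phi>} = - sum f P0"
    using negates by (simp add: sum.reindex P0_def sum_negf)
  moreover have "sum f P = sum f (P \<inter> {\<Phi>. x \<notin> \<Phi>}) + sum f (P - {\<Phi>. x \<notin> \<Phi>})"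
    by (rule sum.Int_Diff[OF assms(1)])
  moreover have "P \<inter> {\<Phi>. x \<notin> \<Phi>} = P0" "P - {\<Phi>. x \<notin> \<Phi>} = {\<Phi>\<in>P. x \<in> \<Phi>}"
    by (auto simp: P0_def)
  ultimately show ?thesis by simp
qed

lemma connected_SC_crossing_facet:
  assumes "finite I" "connected_SC I \<Gamma>" "S \<union> T = I" "S \<inter> T = {}" "S \<noteq> {}" "T \<noteq> {}"
  obtains X where "facet X \<Gamma>" "\<not> X \<subseteq> S" "\<not> X \<subseteq> T"
proof -
  have \<Gamma>: "\<Gamma> \<in> SC I" using assms(2) by (simp add: connected_SC_def)
  obtain X0 where X0: "X0 \<in> \<Gamma>" "\<not> X0 \<subseteq> S" "\<not> X0 \<subseteq> T"
  proof (rule ccontr)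
    assume "\<not> thesis"
    with that have "\<Gamma> = restr \<Gamma> S \<union> restr \<Gamma> T" by (auto simp: restr_def)
    moreover have "restr \<Gamma> S \<in> SC S" "restr \<Gamma> T \<in> SC T" using \<Gamma> by (auto simp: SC_def restr_def)
    ultimately show False using assms(2-6) unfolding connected_SC_def by blast
  qed
  obtain X where X: "X \<in> \<Gamma>" "X0 \<subseteq> X" "\<forall>Y\<in>\<Gamma>. X \<subseteq> Y \<longrightarrow> X = Y"
    using finite_has_maximal2[OF finite_complex[OF assms(1) \<Gamma>] X0(1)] by blast
  then have "facet X \<Gamma>" by (auto simp: facet_def)
  moreover have "\<not> X \<subseteq> S" "\<not> X \<subseteq> T" using X(2) X0(2,3) by blast+
  ultimately show ?thesis by (rule that)
qed

lemma omega_primitive: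
  assumes "finite I" "connected_SC I \<Gamma>"
  shows "primitive I (omega I \<Gamma> :: _ \<Rightarrow> 'k::ring_1)"
  unfolding primitive_def
proof (intro allI impI)
  fix S T A B assume split: "S \<union> T = I \<and> S \<inter> T = {} \<and> S \<noteq> {} \<and> T \<noteq> {}"
  have \<Gamma>: "\<Gamma> \<in> SC I" using assms(2) by (simp add: connected_SC_def)
  obtain X where X: "facet X \<Gamma>" "\<not> X \<subseteq> S" "\<not> X \<subseteq> T"
    using connected_SC_crossing_facet[OF assms] split by blast
  \<comment> \<open>all families, not only complexes, so that toggling \<open>X\<close> stays in \<open>P\<close>; \<open>\<omega>\<^sup>\<Gamma>\<close> vanishes off \<open>SC I\<close>\<close>
  define P where "P = {\<Phi>. \<Phi> \<subseteq> Pow I \<and> restr \<Phi> S = A \<and> restr \<Phi> T = B}"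
  have "finite P" using assms(1) by (auto simp: P_def intro: finite_subset[of _ "Pow (Pow I)"])
  have "Delta_coeff I S T (omega I \<Gamma>) A B = (\<Sum>\<Phi>\<in>P. omega I \<Gamma> \<Phi> :: 'k)"
    unfolding Delta_coeff_def
    by (rule sum.mono_neutral_left[OF \<open>finite P\<close>]) (auto simp: P_def SC_def omega_def)
  also have "\<dots> = 0"
  proof (rule sum_eq_0_if_insert_negates[OF \<open>finite P\<close>])
    have "X \<in> Pow I" using X(1) SC_subset_Pow[OF \<Gamma>] by (auto simp: facet_def)
    then show "insert X \<Phi> \<in> P \<longleftrightarrow> \<Phi> \<in> P" for \<Phi>
      using X(2,3) by (auto simp: P_def restr_def)
    show "(omega I \<Gamma> :: _ \<Rightarrow> 'k) (insert X \<Phi>) = - omega I \<Gamma> \<Phi>" if "X \<notin> \<Phi>" for \<Phi>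
      by (rule omega_insert_facet[OF assms(1) \<Gamma> X(1) that])
  qed
  finally show "Delta_coeff I S T (omega I \<Gamma>) A B = (0::'k)" .
qed

lemma omega_in_primitives:
  "finite I \<Longrightarrow> connected_SC I \<Gamma> \<Longrightarrow> (omega I \<Gamma> :: _ \<Rightarrow> 'k::ring_1) \<in> primitives I"
  by (simp add: primitives_def omega_primitive) (simp add: kSC_def omega_def)

lemma primitives_subspace:
  "module.subspace fscale (primitives I :: ('a set set \<Rightarrow> 'k::comm_ring_1) set)"
proof -
  interpret module "fscale :: 'k \<Rightarrow> ('a set set \<Rightarrow> 'k) \<Rightarrow> _" by (rule module_fscale)
  show ?thesis
    unfolding subspace_def primitives_def primitive_def kSC_def Delta_coeff_def
    by (auto simp: fscale_def sum.distrib simp flip: sum_distrib_left)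
qed

lemma sum_fibres_eq_0_if_primitive:
  assumes "finite I" "primitive I p" "S \<union> T = I" "S \<inter> T = {}" "S \<noteq> {}" "T \<noteq> {}"
  shows "(\<Sum>\<Phi>\<in>{\<Phi>\<in>SC I. Q (restr \<Phi> S) (restr \<Phi> T)}. p \<Phi>) = 0"
proof -
  define F where "F = {\<Phi>\<in>SC I. Q (restr \<Phi> S) (restr \<Phi> T)}"
  let ?key = "\<lambda>\<Phi>. (restr \<Phi> S, restr \<Phi> T)"
  have Delta: "Delta_coeff I S T p A B = 0" for A B
    using assms(2-6) by (simp add: primitive_def)
  have "sum p F = (\<Sum>y\<in>?key ` SC I. \<Sum>\<Phi>\<in>{\<Phi>\<in>F. ?key \<Phi> = y}. p \<Phi>)"
    using finite_SC[OF assms(1)] by (intro sum.group[symmetric]) (auto simp: F_def)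
  also have "\<dots> = 0"
  proof (rule sum.neutral, rule ballI)
    fix y :: "'a set set \<times> 'a set set"
    show "(\<Sum>\<Phi>\<in>{\<Phi>\<in>F. ?key \<Phi> = y}. p \<Phi>) = 0"
    proof (cases "Q (fst y) (snd y)")
      case True
      then have "{\<Phi>\<in>F. ?key \<Phi> = y} = {\<Phi>\<in>SC I. restr \<Phi> S = fst y \<and> restr \<Phi> T = snd y}"
        by (auto simp: F_def)
      then show ?thesis using Delta[of "fst y" "snd y"] by (simp add: Delta_coeff_def)
    next
      case False
      then have "{\<Phi>\<in>F. ?key \<Phi> = y} = {}" by (auto simp: F_def)
      then show ?thesis by (simp only: sum.empty)
    qed
  qed
  finally show ?thesis unfolding F_def .
qed

lemma upper_sum_eq_0_if_disconnected:
  assumes "finite I" "primitive I p" "\<Gamma> \<in> SC I" "\<not> connected_SC I \<Gamma>"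
  shows "(\<Sum>\<Phi>\<in>{\<Phi>\<in>SC I. \<Gamma> \<subseteq> \<Phi>}. p \<Phi>) = 0"
proof -
  obtain S T \<Gamma>1 \<Gamma>2 where split: "S \<union> T = I" "S \<inter> T = {}" "S \<noteq> {}" "T \<noteq> {}"
    and "\<Gamma>1 \<in> SC S" "\<Gamma>2 \<in> SC T" "\<Gamma> = \<Gamma>1 \<union> \<Gamma>2"
    using assms(3,4) unfolding connected_SC_def by blast
  then have "\<Gamma> \<subseteq> Pow S \<union> Pow T" by (auto simp: SC_def)
  then have "\<Gamma> \<subseteq> \<Phi> \<longleftrightarrow> restr \<Gamma> S \<subseteq> restr \<Phi> S \<and> restr \<Gamma> T \<subseteq> restr \<Phi> T" for \<Phi>
    by (auto simp: restr_def)
  then show ?thesis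
    using sum_fibres_eq_0_if_primitive[OF assms(1,2) split,
        of "\<lambda>A B. restr \<Gamma> S \<subseteq> A \<and> restr \<Gamma> T \<subseteq> B"]
    by simp
qed

lemma mobius_inversion_SC:
  assumes "finite I" "p \<in> kSC I"
  shows "p = (\<Sum>\<Gamma>\<in>SC I. fscale (\<Sum>\<Phi>\<in>{\<Phi>\<in>SC I. \<Gamma> \<subseteq> \<Phi>}. p \<Phi>) (omega I \<Gamma> :: _ \<Rightarrow> 'k::comm_ring_1))"
proof
  fix \<Psi>
  show "p \<Psi> = (\<Sum>\<Gamma>\<in>SC I. fscale (\<Sum>\<Phi>\<in>{\<Phi>\<in>SC I. \<Gamma> \<subseteq> \<Phi>}. p \<Phi>) (omega I \<Gamma>)) \<Psi>"
  proof (cases "\<Psi> \<in> SC I")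
    case False
    then show ?thesis using assms(2) by (simp add: kSC_def sum_fun_apply fscale_def omega_def)
  next
    case True
    have "(\<Sum>\<Gamma>\<in>SC I. fscale (\<Sum>\<Phi>\<in>{\<Phi>\<in>SC I. \<Gamma> \<subseteq> \<Phi>}. p \<Phi>) (omega I \<Gamma>)) \<Psi>
        = (\<Sum>\<Gamma>\<in>SC I. \<Sum>\<Phi>\<in>SC I. (if \<Gamma> \<subseteq> \<Phi> then p \<Phi> else 0) * mobius_SC \<Psi> \<Gamma>)"
      using finite_SC[OF assms(1)] True
      by (simp add: sum_fun_apply fscale_def omega_eq[OF assms(1)] sum.inter_filter sum_distrib_right)
    also have "\<dots> = (\<Sum>\<Phi>\<in>SC I. p \<Phi> * (\<Sum>\<Gamma>\<in>{\<Gamma>\<in>SC I. \<Psi> \<subseteq> \<Gamma> \<and> \<Gamma> \<subseteq> \<Phi>}. mobius_SC \<Psi> \<Gamma>))"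
      using finite_SC[OF assms(1)]
      by (subst sum.swap) (auto simp: sum.inter_filter sum_distrib_left mobius_SC_def intro!: sum.cong)
    also have "\<dots> = (\<Sum>\<Phi>\<in>SC I. if \<Psi> = \<Phi> then p \<Phi> else 0)"
      by (intro sum.cong refl) (simp add: sum_mobius_SC_interval[OF assms(1) True])
    also have "\<dots> = p \<Psi>"
      using finite_SC[OF assms(1)] True by simp
    finally show ?thesis ..
  qed
qed

lemma span_omega_connected:
  assumes "finite I"
  shows "module.span fscale ((omega I :: _ \<Rightarrow> _ \<Rightarrow> 'k::comm_ring_1) ` {\<Gamma>. connected_SC I \<Gamma>}) = primitives I"
    (is "module.span fscale ?\<Omega> = _")
proof -
  interpret module "fscale :: 'k \<Rightarrow> ('a set set \<Rightarrow> 'k) \<Rightarrow> _" by (rule module_fscale)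
  have "p \<in> span ?\<Omega>" if p: "p \<in> primitives I" for p
  proof -
    define c where "c \<Gamma> = (\<Sum>\<Phi>\<in>{\<Phi>\<in>SC I. \<Gamma> \<subseteq> \<Phi>}. p \<Phi>)" for \<Gamma>
    have "p \<in> kSC I" "primitive I p" using p by (simp_all add: primitives_def)
    have "p = (\<Sum>\<Gamma>\<in>SC I. fscale (c \<Gamma>) (omega I \<Gamma>))"
      unfolding c_def by (rule mobius_inversion_SC[OF assms \<open>p \<in> kSC I\<close>])
    also have "\<dots> = (\<Sum>\<Gamma>\<in>{\<Gamma>. connected_SC I \<Gamma>}. fscale (c \<Gamma>) (omega I \<Gamma>))"
    proof (rule sum.mono_neutral_right[OF finite_SC[OF assms]])
      show "{\<Gamma>. connected_SC I \<Gamma>} \<subseteq> SC I" by (auto simp: connected_SC_def)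
      have "c \<Gamma> = 0" if "\<Gamma> \<in> SC I" "\<not> connected_SC I \<Gamma>" for \<Gamma>
        using upper_sum_eq_0_if_disconnected[OF assms \<open>primitive I p\<close> that] by (simp add: c_def)
      then show "\<forall>\<Gamma>\<in>SC I - {\<Gamma>. connected_SC I \<Gamma>}. fscale (c \<Gamma>) (omega I \<Gamma>) = 0"
        by (simp add: fscale_def fun_eq_iff)
    qed
    also have "\<dots> \<in> span ?\<Omega>"
      by (intro span_sum span_scale span_base) auto
    finally show ?thesis .
  qed
  moreover have "span ?\<Omega> \<subseteq> primitives I"
  proof (rule span_minimal)
    show "?\<Omega> \<subseteq> primitives I" using omega_in_primitives[OF assms] by blast
    show "subspace (primitives I)" by (rule primitives_subspace)
  qed
  ultimately show ?thesis by blast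
qed

theorem mainTheorem18:
  fixes I :: "'a set"
  assumes "finite I"
  defines "Conn \<equiv> {\<Gamma>. connected_SC I \<Gamma>}"
  shows "inj_on (omega I :: 'a set set \<Rightarrow> ('a set set \<Rightarrow> 'k::field_char_0)) Conn
       \<and> omega I ` Conn \<subseteq> primitives I
       \<and> \<not> module.dependent fscale (omega I ` Conn)
       \<and> module.span fscale (omega I ` Conn) = primitives I"
proof -
  have "Conn \<subseteq> SC I" by (auto simp: Conn_def connected_SC_def)
  then have diag: "omega I \<Gamma> \<Gamma> = 1" if "\<Gamma> \<in> Conn" for \<Gamma>
    using omega_diag[OF assms(1)] that by blast
  have tri: "\<Phi> \<subseteq> \<Gamma>" if "\<Gamma> \<in> Conn" "omega I \<Gamma> \<Phi> \<noteq> 0" for \<Gamma> \<Phi>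
    using omega_nonzero_imp_subset that(2) .
  show ?thesis
  proof (intro conjI)
    show "inj_on (omega I :: _ \<Rightarrow> _ \<Rightarrow> 'k) Conn"
      using diag tri by (rule inj_on_unitriangular)
    show "omega I ` Conn \<subseteq> primitives I"
      using omega_in_primitives[OF assms(1)] by (auto simp: Conn_def)
    show "\<not> module.dependent fscale (omega I ` Conn)"
      using diag tri by (rule independent_unitriangular)
    show "module.span fscale (omega I ` Conn) = primitives I"
      unfolding Conn_def by (rule span_omega_connected[OF assms(1)])
  qed
qed

end
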